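(* Let $\mathcal{G}$ be a $k$-uniform hypergraph. Then the following are equivalent: (1) $\mathcal{G}$ is connected; (2) $\alpha_j(\mathcal{G})>0$ for all $j\in V(\mathcal{G})$; (3) $\alpha_j(\mathcal{G})>0$ for some $j\in V(\mathcal{G})$.
   Context: A $k$-uniform hypergraph $\mathcal{G}$ has a finite vertex set $V(\mathcal{G})=[n]$ and an edge set $E(\mathcal{G})$ of $k$-element subsets of $V(\mathcal{G})$. For $\mathbf{x}\in\mathbb{R}^n$, the Laplacian form is $\mathcal{L}_\mathcal{G}\mathbf{x}^k=\sum_{\{i_1,\ldots,i_k\}\in E(\mathcal{G})}\left(x_{i_1}^k+\cdots+x_{i_k}^k-k\,x_{i_1}\cdots x_{i_k}\right)$ (this is $\mathcal{L}_\mathcal{G}=\mathcal{D}_\mathcal{G}-\mathcal{A}_\mathcal{G}$ applied to $\mathbf{x}^k$, where $\mathcal{D}_\mathcal{G}$ is the diagonal degree tensor and $\mathcal{A}_\mathcal{G}$ the adjacency tensor with entries $1/(k-1)!$ on edges). The inverse Perron value of a vertex $j$ is $\alpha_j(\mathcal{G})=\min\{\mathcal{L}_\mathcal{G}\mathbf{x}^k : \mathbf{x}\in\mathbb{R}^n_+,\ \sum_{i=1}^n x_i^k=1,\ x_j=0\}$, where $\mathbb{R}^n_+$ is the set of nonnegative vectors. A path is an alternating sequence $v_0e_1v_1\cdots e_lv_l$ of distinct vertices and distinct edges with $v_{i-1},v_i\in e_i$; $\mathcal{G}$ is connected if any two vertices are joined by a path. *)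

theory Defs
  imports "HOL-Analysis.Analysis"
begin

definition uniform_hypergraph :: "nat \<Rightarrow> nat \<Rightarrow> nat set set \<Rightarrow> bool" where
  "uniform_hypergraph n k E \<longleftrightarrow> (\<forall>e\<in>E. e \<subseteq> {1..n} \<and> card e = k)"

definition laplacian_form :: "nat \<Rightarrow> nat set set \<Rightarrow> (nat \<Rightarrow> real) \<Rightarrow> real" where
  "laplacian_form k E x = (\<Sum>e\<in>E. (\<Sum>i\<in>e. x i ^ k) - real k * (\<Prod>i\<in>e. x i))"

definition hg_path :: "nat set set \<Rightarrow> nat list \<Rightarrow> nat set list \<Rightarrow> bool" where
  "hg_path E vs es \<longleftrightarrow> vs \<noteq> [] \<and> length es + 1 = length vs \<and> distinct vs \<and> distinct es \<and>
     (\<forall>i<length es. es ! i \<in> E \<and> vs ! i \<in> es ! i \<and> vs ! Suc i \<in> es ! i)"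

definition hg_connected :: "nat \<Rightarrow> nat set set \<Rightarrow> bool" where
  "hg_connected n E \<longleftrightarrow> (\<forall>u\<in>{1..n}. \<forall>v\<in>{1..n}. \<exists>vs es. hg_path E vs es \<and> hd vs = u \<and> last vs = v)"

text \<open>Inverse Perron value alpha_j(G): the minimum (attained, by compactness) of the Laplacian form
  over nonnegative x with sum x_i^k = 1 and x_j = 0; written as the infimum of this value set.\<close>
definition inv_perron :: "nat \<Rightarrow> nat \<Rightarrow> nat set set \<Rightarrow> nat \<Rightarrow> real" where
  "inv_perron n k E j = Inf (laplacian_form k E ` {x. (\<forall>i\<in>{1..n}. x i \<ge> 0) \<and>
       (\<Sum>i\<in>{1..n}. x i ^ k) = 1 \<and> x j = 0})"

end

theory Submission
  imports Defs
begin

text \<open>By AM-GM every edge contributes a nonnegative term to the Laplacian form, which vanishes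
  exactly when the vector is constant on the edge. If the hypergraph is disconnected, a suitably
  normalised indicator vector of a component avoiding j is feasible and has form value 0, so
  every inverse Perron value is 0. If it is connected, the infimum is attained by compactness;
  a minimiser of value 0 would be constant along all paths, hence equal to its value 0 at j
  everywhere, contradicting the normalisation.\<close>

lemma card_mult_prod_le_sum_power:
  fixes a :: "'a \<Rightarrow> real"
  assumes "finite e" and "\<forall>i\<in>e. a i \<ge> 0"
  shows "real (card e) * (\<Prod>i\<in>e. a i) \<le> (\<Sum>i\<in>e. a i ^ card e)"
proof (cases "\<exists>i\<in>e. a i = 0")
  case True
  then have "(\<Prod>i\<in>e. a i) = 0" using assms(1) by auto
  moreover have "(\<Sum>i\<in>e. a i ^ card e) \<ge> 0" using assms(2) by (intro sum_nonneg) auto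
  ultimately show ?thesis by simp
next
  case False
  define k where "k = card e"
  have pos: "\<forall>i\<in>e. a i > 0" using False assms(2) by force
  show ?thesis
  proof (cases "e = {}")
    case False
    then have k: "k \<ge> 1" using assms(1) by (simp add: k_def Suc_le_eq card_gt_0_iff)
    have weights: "(\<Sum>i\<in>e. 1 / real k) = 1" using k by (simp add: k_def)
    have "(\<Prod>i\<in>e. a i) = exp (\<Sum>i\<in>e. (1 / real k) *\<^sub>R (real k * ln (a i)))"
      using assms(1) pos k by (simp add: exp_sum)
    also have "\<dots> \<le> (\<Sum>i\<in>e. (1 / real k) * exp (real k * ln (a i)))"
      by (rule convex_on_sum[OF assms(1) False exp_convex weights]) auto
    also have "\<dots> = (1 / real k) * (\<Sum>i\<in>e. a i ^ k)"
      using pos by (simp add: sum_distrib_left exp_of_nat_mult)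
    finally show ?thesis using k by (simp add: k_def field_simps)
  qed simp
qed

lemma power_midpoint_le:
  fixes a b :: real
  assumes "a \<ge> 0" "b \<ge> 0"
  shows "2 * ((a + b) / 2) ^ k \<le> a ^ k + b ^ k"
proof -
  have "convex_on {0..} (\<lambda>x::real. x ^ k)"
    by (cases "even k") (auto intro: convex_power_odd convex_on_subset[OF convex_power_even])
  from convex_onD[OF this, of "1/2" a b] assms show ?thesis
    by (simp add: add_divide_distrib)
qed

text \<open>The equality case of AM-GM, by smoothing: replacing two different values by their mean
  strictly increases the product and does not increase the sum of powers.\<close>

lemma card_mult_prod_less_sum_power:
  fixes a :: "'a \<Rightarrow> real"
  assumes fin: "finite e" and nonneg: "\<forall>i\<in>e. a i \<ge> 0"
    and "p \<in> e" "q \<in> e" and differ: "a p \<noteq> a q"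
  shows "real (card e) * (\<Prod>i\<in>e. a i) < (\<Sum>i\<in>e. a i ^ card e)"
proof -
  define k where "k = card e"
  have pq: "p \<noteq> q" "{p, q} \<subseteq> e" using differ assms(3,4) by auto
  then have k: "k \<ge> 1" using fin by (simp add: k_def Suc_le_eq card_gt_0_iff) blast
  define m where "m = (a p + a q) / 2"
  define c where "c = a(p := m, q := m)"
  define R where "R = (\<Prod>i\<in>e - {p, q}. a i)"
  define S where "S = (\<Sum>i\<in>e - {p, q}. a i ^ k)"
  have split_prod: "prod f e = f p * f q * prod f (e - {p, q})" for f :: "'a \<Rightarrow> real"
    using prod.subset_diff[OF pq(2) fin] pq(1) by (simp add: mult.commute)
  have split_sum: "sum f e = f p + f q + sum f (e - {p, q})" for f :: "'a \<Rightarrow> real"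
    using sum.subset_diff[OF pq(2) fin] pq(1) by (simp add: ac_simps)
  have c_outside: "\<forall>i\<in>e - {p, q}. c i = a i" by (simp add: c_def)
  have ab: "a p \<ge> 0" "a q \<ge> 0" using nonneg assms(3,4) by auto
  have "R \<ge> 0" "S \<ge> 0"
    using nonneg by (auto simp: R_def S_def intro!: prod_nonneg sum_nonneg)
  show ?thesis
  proof (cases "R = 0")
    case True
    have "0 < a p ^ k + a q ^ k"
      using ab differ k by (cases "a p = 0") (auto intro: add_pos_nonneg add_nonneg_pos)
    then show ?thesis using True \<open>S \<ge> 0\<close> split_prod[of a] split_sum[of "\<lambda>i. a i ^ k"]
      by (simp add: R_def S_def k_def)
  next
    case False
    have "0 < (a p - a q)\<^sup>2" using differ by simp
    then have "a p * a q < m * m" by (simp add: m_def power2_eq_square field_simps)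
    then have "real k * (\<Prod>i\<in>e. a i) < real k * (\<Prod>i\<in>e. c i)"
      using False \<open>R \<ge> 0\<close> k split_prod[of a] split_prod[of c] c_outside pq(1)
      by (simp add: R_def c_def)
    also have "\<dots> \<le> (\<Sum>i\<in>e. c i ^ k)"
      unfolding k_def by (rule card_mult_prod_le_sum_power[OF fin]) (use nonneg ab in \<open>simp add: c_def m_def\<close>)
    also have "\<dots> = 2 * m ^ k + S"
      using split_sum[of "\<lambda>i. c i ^ k"] c_outside pq(1) by (simp add: S_def c_def)
    also have "\<dots> \<le> (\<Sum>i\<in>e. a i ^ k)"
      using split_sum[of "\<lambda>i. a i ^ k"] power_midpoint_le[OF ab] by (simp add: S_def m_def)
    finally show ?thesis by (simp add: k_def)
  qed
qed

lemma uniform_hypergraph_finite_edges: "uniform_hypergraph n k E \<Longrightarrow> finite E"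
  unfolding uniform_hypergraph_def by (rule finite_subset[of E "Pow {1..n}"]) auto

lemma uniform_hypergraph_edgeD:
  assumes "uniform_hypergraph n k E" "e \<in> E"
  shows "e \<subseteq> {1..n}" "card e = k" "finite e"
  using assms finite_subset[of e "{1..n}"] unfolding uniform_hypergraph_def by auto

lemma laplacian_form_cong:
  assumes "uniform_hypergraph n k E" and "\<forall>i\<in>{1..n}. x i = y i"
  shows "laplacian_form k E x = laplacian_form k E y"
  unfolding laplacian_form_def
proof (rule sum.cong[OF refl])
  fix e assume "e \<in> E"
  then have "\<forall>i\<in>e. x i = y i" using assms uniform_hypergraph_edgeD(1) by blast
  then show "(\<Sum>i\<in>e. x i ^ k) - real k * (\<Prod>i\<in>e. x i) = (\<Sum>i\<in>e. y i ^ k) - real k * (\<Prod>i\<in>e. y i)"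
    by simp
qed

lemma laplacian_edge_term_nonneg:
  assumes "uniform_hypergraph n k E" "e \<in> E" and "\<forall>i\<in>{1..n}. x i \<ge> 0"
  shows "(\<Sum>i\<in>e. x i ^ k) - real k * (\<Prod>i\<in>e. x i) \<ge> 0"
  using card_mult_prod_le_sum_power[of e x] uniform_hypergraph_edgeD[OF assms(1,2)] assms(3)
  by auto

lemma laplacian_form_nonneg:
  assumes "uniform_hypergraph n k E" and "\<forall>i\<in>{1..n}. x i \<ge> 0"
  shows "laplacian_form k E x \<ge> 0"
  unfolding laplacian_form_def
  using laplacian_edge_term_nonneg[OF assms(1) _ assms(2)] by (simp add: sum_nonneg)

lemma laplacian_form_eq_0_iff:
  assumes H: "uniform_hypergraph n k E" and nonneg: "\<forall>i\<in>{1..n}. x i \<ge> 0"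
  shows "laplacian_form k E x = 0 \<longleftrightarrow> (\<forall>e\<in>E. \<forall>a\<in>e. \<forall>b\<in>e. x a = x b)"
proof
  assume "laplacian_form k E x = 0"
  then have term_0: "\<forall>e\<in>E. (\<Sum>i\<in>e. x i ^ k) - real k * (\<Prod>i\<in>e. x i) = 0"
    unfolding laplacian_form_def
    by (subst (asm) sum_nonneg_eq_0_iff[OF uniform_hypergraph_finite_edges[OF H]])
      (use laplacian_edge_term_nonneg[OF H _ nonneg] in auto)
  show "\<forall>e\<in>E. \<forall>a\<in>e. \<forall>b\<in>e. x a = x b"
  proof (intro ballI, rule ccontr)
    fix e a b assume "e \<in> E" "a \<in> e" "b \<in> e" "x a \<noteq> x b"
    with card_mult_prod_less_sum_power[of e x a b] uniform_hypergraph_edgeD[OF H \<open>e \<in> E\<close>]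
    have "real k * (\<Prod>i\<in>e. x i) < (\<Sum>i\<in>e. x i ^ k)" using nonneg by auto
    with term_0 \<open>e \<in> E\<close> show False by fastforce
  qed
next
  assume const: "\<forall>e\<in>E. \<forall>a\<in>e. \<forall>b\<in>e. x a = x b"
  have "(\<Sum>i\<in>e. x i ^ k) = real k * (\<Prod>i\<in>e. x i)" if "e \<in> E" for e
  proof (cases "e = {}")
    case False
    then obtain a where "a \<in> e" by blast
    with const that have "\<forall>i\<in>e. x i = x a" by blast
    then have "(\<Sum>i\<in>e. x i ^ k) = (\<Sum>i\<in>e. x a ^ k)" "(\<Prod>i\<in>e. x i) = (\<Prod>i\<in>e. x a)"
      by simp_all
    then show ?thesis using uniform_hypergraph_edgeD(2)[OF H that] by simp
  qed (use uniform_hypergraph_edgeD(2)[OF H that] in simp)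
  then show "laplacian_form k E x = 0" by (simp add: laplacian_form_def)
qed

definition hg_adj :: "nat set set \<Rightarrow> nat \<Rightarrow> nat \<Rightarrow> bool" where
  "hg_adj E u v \<longleftrightarrow> (\<exists>e\<in>E. u \<in> e \<and> v \<in> e)"

lemma symp_hg_adj: "symp (hg_adj E)"
  unfolding symp_def hg_adj_def by blast

lemma rtranclp_hg_adj_if_hg_path:
  assumes "hg_path E vs es"
  shows "(hg_adj E)\<^sup>*\<^sup>* (hd vs) (last vs)"
proof -
  from assms have ne: "vs \<noteq> []" and len: "length es + 1 = length vs"
    and steps: "\<forall>i<length es. es!i \<in> E \<and> vs!i \<in> es!i \<and> vs!Suc i \<in> es!i"
    unfolding hg_path_def by auto
  have "(hg_adj E)\<^sup>*\<^sup>* (vs ! 0) (vs ! i)" if "i < length vs" for i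
    using that
  proof (induction i)
    case (Suc i)
    then have "i < length es" using len by simp
    then have "hg_adj E (vs ! i) (vs ! Suc i)" using steps unfolding hg_adj_def by blast
    with Suc show ?case by simp
  qed simp
  from this[of "length vs - 1"] ne show ?thesis by (simp add: hd_conv_nth last_conv_nth)
qed

lemma hg_path_take:
  assumes "hg_path E vs es" "i < length vs"
  shows "hg_path E (take (Suc i) vs) (take i es)"
  using assms unfolding hg_path_def by simp

lemma hg_path_snoc:
  assumes path: "hg_path E vs es" and "e \<in> E" "e \<notin> set es" "w \<notin> set vs" "last vs \<in> e" "w \<in> e"
  shows "hg_path E (vs @ [w]) (es @ [e])"
proof -
  from path have ne: "vs \<noteq> []" and len: "length vs = Suc (length es)"
    and steps: "\<forall>i<length es. es!i \<in> E \<and> vs!i \<in> es!i \<and> vs!Suc i \<in> es!i"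
    unfolding hg_path_def by auto
  have "(es @ [e]) ! l \<in> E \<and> (vs @ [w]) ! l \<in> (es @ [e]) ! l \<and> (vs @ [w]) ! Suc l \<in> (es @ [e]) ! l"
    if "l < length (es @ [e])" for l
  proof (cases "l < length es")
    case True
    with steps len show ?thesis by (simp add: nth_append)
  next
    case False
    with that have "l = length es" by simp
    moreover have "(vs @ [w]) ! length es = last vs" using ne len by (simp add: nth_append last_conv_nth)
    ultimately show ?thesis using assms(2,5,6) len by (simp add: nth_append)
  qed
  with path assms(2-4) show ?thesis unfolding hg_path_def by simp
qed

text \<open>To append a vertex w of an edge through the end of a path: if w is already on the path,
  cut there; otherwise cut at the first vertex lying in the edge, so that the edge is not yet
  used, and step to w.\<close>

lemma hg_path_extend:
  assumes path: "hg_path E vs es" and "e \<in> E" "last vs \<in> e" "w \<in> e"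
  obtains vs' es' where "hg_path E vs' es'" "hd vs' = hd vs" "last vs' = w"
proof -
  from path have ne: "vs \<noteq> []" and len: "length es + 1 = length vs"
    and steps: "\<forall>i<length es. es!i \<in> E \<and> vs!i \<in> es!i \<and> vs!Suc i \<in> es!i"
    unfolding hg_path_def by auto
  show ?thesis
  proof (cases "w \<in> set vs")
    case True
    then obtain i where i: "i < length vs" "vs ! i = w" by (auto simp: in_set_conv_nth)
    moreover have "hd (take (Suc i) vs) = hd vs" using ne by (cases vs) auto
    ultimately show ?thesis using hg_path_take[OF path i(1)] that by (simp add: take_Suc_conv_app_nth)
  next
    case False
    define i where "i = (LEAST i. i < length vs \<and> vs ! i \<in> e)"
    have "length vs - 1 < length vs \<and> vs ! (length vs - 1) \<in> e"
      using ne \<open>last vs \<in> e\<close> by (simp add: last_conv_nth)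
    then have i: "i < length vs" "vs ! i \<in> e" unfolding i_def by (metis (mono_tags) LeastI)+
    have before_i: "vs ! l \<notin> e" if "l < i" for l
      using that i not_less_Least[of l "\<lambda>i. i < length vs \<and> vs ! i \<in> e"] by (simp add: i_def)
    have "e \<notin> set (take i es)"
    proof
      assume "e \<in> set (take i es)"
      then obtain l where "l < i" "l < length es" "es ! l = e" by (auto simp: in_set_conv_nth)
      with steps before_i show False by blast
    qed
    moreover have "w \<notin> set (take (Suc i) vs)" using False by (blast dest: in_set_takeD)
    moreover have "last (take (Suc i) vs) \<in> e" using i by (simp add: take_Suc_conv_app_nth)
    ultimately have "hg_path E (take (Suc i) vs @ [w]) (take i es @ [e])"
      using hg_path_snoc[OF hg_path_take[OF path i(1)] \<open>e \<in> E\<close>] \<open>w \<in> e\<close> by blast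
    moreover have "hd (take (Suc i) vs @ [w]) = hd vs" using ne by (cases vs) auto
    ultimately show ?thesis using that by simp
  qed
qed

lemma hg_path_if_rtranclp_hg_adj:
  assumes "(hg_adj E)\<^sup>*\<^sup>* u v"
  shows "\<exists>vs es. hg_path E vs es \<and> hd vs = u \<and> last vs = v"
  using assms
proof (induction rule: rtranclp_induct)
  case base
  have "hg_path E [u] []" by (simp add: hg_path_def)
  then show ?case by fastforce
next
  case (step v w)
  then obtain vs es where "hg_path E vs es" "hd vs = u" "last vs = v" by blast
  moreover from step.hyps(2) obtain e where "e \<in> E" "v \<in> e" "w \<in> e" unfolding hg_adj_def by blast
  ultimately show ?case by (metis hg_path_extend)
qed

lemma hg_connected_iff_rtranclp_hg_adj:
  "hg_connected n E \<longleftrightarrow> (\<forall>u\<in>{1..n}. \<forall>v\<in>{1..n}. (hg_adj E)\<^sup>*\<^sup>* u v)"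
  unfolding hg_connected_def
  by (metis hg_path_if_rtranclp_hg_adj rtranclp_hg_adj_if_hg_path)

lemma edgewise_constant_rtranclp_hg_adj:
  assumes "\<forall>e\<in>E. \<forall>a\<in>e. \<forall>b\<in>e. x a = x b" and "(hg_adj E)\<^sup>*\<^sup>* u v"
  shows "x v = x u"
  using assms(2)
proof (induction rule: rtranclp_induct)
  case (step v w)
  then obtain e where "e \<in> E" "v \<in> e" "w \<in> e" unfolding hg_adj_def by blast
  with assms(1) step.IH show ?case by metis
qed simp

lemma not_hg_connected_unreachable:
  assumes "\<not> hg_connected n E"
  obtains b where "b \<in> {1..n}" "\<not> (hg_adj E)\<^sup>*\<^sup>* b j"
proof -
  obtain u v where "u \<in> {1..n}" "v \<in> {1..n}" "\<not> (hg_adj E)\<^sup>*\<^sup>* u v"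
    using assms by (auto simp: hg_connected_iff_rtranclp_hg_adj)
  moreover have "(hg_adj E)\<^sup>*\<^sup>* u v" if "(hg_adj E)\<^sup>*\<^sup>* u j" "(hg_adj E)\<^sup>*\<^sup>* v j"
    using rtranclp_trans[OF that(1) sympD[OF symp_rtranclp[OF symp_hg_adj] that(2)]] .
  ultimately show ?thesis using that by blast
qed

definition perron_feasible :: "nat \<Rightarrow> nat \<Rightarrow> nat \<Rightarrow> (nat \<Rightarrow> real) set" where
  "perron_feasible n k j =
     {x. (\<forall>i\<in>{1..n}. x i \<ge> 0) \<and> (\<Sum>i\<in>{1..n}. x i ^ k) = 1 \<and> x j = 0}"

lemma inv_perron_eq_Inf: "inv_perron n k E j = Inf (laplacian_form k E ` perron_feasible n k j)"
  by (simp add: inv_perron_def perron_feasible_def)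

lemma inv_perron_le:
  assumes "uniform_hypergraph n k E" and "x \<in> perron_feasible n k j"
  shows "inv_perron n k E j \<le> laplacian_form k E x"
  unfolding inv_perron_eq_Inf
proof (rule cInf_lower)
  show "bdd_below (laplacian_form k E ` perron_feasible n k j)"
    using laplacian_form_nonneg[OF assms(1)] by (auto simp: perron_feasible_def intro: bdd_belowI[of _ 0])
qed (use assms(2) in simp)

lemma inv_perron_nonpos_if_not_hg_connected:
  assumes H: "uniform_hypergraph n k E" and k: "k \<ge> 1" and "\<not> hg_connected n E"
  shows "inv_perron n k E j \<le> 0"
proof -
  obtain b where b: "b \<in> {1..n}" "\<not> (hg_adj E)\<^sup>*\<^sup>* b j"
    using not_hg_connected_unreachable[OF assms(3)] by blast
  define C where "C = {w \<in> {1..n}. (hg_adj E)\<^sup>*\<^sup>* b w}"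
  define c where "c = root k (1 / real (card C))"
  define x where "x = (\<lambda>w. if w \<in> C then c else 0)"
  have "c \<ge> 0" unfolding c_def by (rule real_root_ge_zero) simp
  have "b \<in> C" using b by (simp add: C_def)
  then have "card C > 0" by (auto simp: C_def card_gt_0_iff)
  have "(\<Sum>i\<in>{1..n}. x i ^ k) = (\<Sum>i\<in>{1..n}. if i \<in> C then c ^ k else 0)"
    using k by (intro sum.cong) (simp_all add: x_def)
  also have "\<dots> = (\<Sum>i\<in>{1..n} \<inter> C. c ^ k)" by (rule sum.inter_restrict[symmetric]) simp
  also have "{1..n} \<inter> C = C" by (auto simp: C_def)
  also have "(\<Sum>i\<in>C. c ^ k) = real (card C) * c ^ k" by simp
  also have "\<dots> = 1" using k \<open>card C > 0\<close> by (simp add: c_def)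
  finally have feasible: "x \<in> perron_feasible n k j"
    using b \<open>c \<ge> 0\<close> by (auto simp: perron_feasible_def x_def C_def)
  have "\<forall>e\<in>E. \<forall>a\<in>e. \<forall>a'\<in>e. x a = x a'"
  proof (intro ballI)
    fix e a a' assume "e \<in> E" "a \<in> e" "a' \<in> e"
    then have "a \<in> {1..n}" "a' \<in> {1..n}" using uniform_hypergraph_edgeD(1)[OF H] by blast+
    moreover have "hg_adj E a a'" "hg_adj E a' a"
      using \<open>e \<in> E\<close> \<open>a \<in> e\<close> \<open>a' \<in> e\<close> unfolding hg_adj_def by blast+
    ultimately have "a \<in> C \<longleftrightarrow> a' \<in> C" by (auto simp: C_def intro: rtranclp.rtrancl_into_rtrancl)
    then show "x a = x a'" by (simp add: x_def)
  qed
  moreover have "\<forall>i\<in>{1..n}. x i \<ge> 0" using \<open>c \<ge> 0\<close> by (simp add: x_def)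
  ultimately have "laplacian_form k E x = 0" using laplacian_form_eq_0_iff[OF H] by blast
  with inv_perron_le[OF H feasible] show ?thesis by simp
qed

lemmas continuous_on_coordinate [continuous_intros] =
  continuous_on_product_then_coordinatewise[OF continuous_on_id]

text \<open>Coordinates outside the vertex set are forced to 0 to obtain compactness in the
  product topology; they do not affect the Laplacian form.\<close>

lemma compact_perron_feasible_supported:
  assumes "k \<ge> 1"
  shows "compact (perron_feasible n k j \<inter> {x. \<forall>i. i \<notin> {1..n} \<longrightarrow> x i = 0})"
proof -
  define B where "B = (\<lambda>i. if i \<in> {1..n} then {0..1::real} else {0})"
  have "compact (Pi UNIV B)"
  proof -
    have "compactin (product_topology (\<lambda>i. euclidean) UNIV) (PiE UNIV B)"
      unfolding compactin_PiE by (auto simp: B_def)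
    then show ?thesis by (simp add: euclidean_product_topology PiE_UNIV_domain)
  qed
  moreover have "closed {x::nat \<Rightarrow> real. (\<Sum>i\<in>{1..n}. x i ^ k) = 1}" "closed {x::nat \<Rightarrow> real. x j = 0}"
    by (intro closed_Collect_eq continuous_intros)+
  moreover have "x i \<le> 1" if "x \<in> perron_feasible n k j" "i \<in> {1..n}" for x i
  proof -
    have "x i ^ k \<le> (\<Sum>i\<in>{1..n}. x i ^ k)"
      using that by (intro member_le_sum) (auto simp: perron_feasible_def)
    then show ?thesis using that assms by (auto simp: perron_feasible_def power_le_one_iff)
  qed
  then have "perron_feasible n k j \<inter> {x. \<forall>i. i \<notin> {1..n} \<longrightarrow> x i = 0}
      = Pi UNIV B \<inter> ({x. (\<Sum>i\<in>{1..n}. x i ^ k) = 1} \<inter> {x. x j = 0})"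
    by (auto simp: perron_feasible_def B_def Pi_def)
  ultimately show ?thesis by (simp add: compact_Int_closed closed_Int)
qed

lemma inv_perron_attained:
  assumes H: "uniform_hypergraph n k E" and k: "k \<ge> 1" and "i \<in> {1..n}" "i \<noteq> j"
  obtains x where "x \<in> perron_feasible n k j" "inv_perron n k E j = laplacian_form k E x"
proof -
  define restrict where "restrict y = (\<lambda>i. if i \<in> {1..n} then y i else 0)" for y :: "nat \<Rightarrow> real"
  define K where "K = perron_feasible n k j \<inter> {x. \<forall>i. i \<notin> {1..n} \<longrightarrow> x i = 0}"
  have restrict_K: "restrict y \<in> K" if "y \<in> perron_feasible n k j" for y
    using that by (auto simp: K_def perron_feasible_def restrict_def)
  have "(\<lambda>l. if l = i then 1 else 0) \<in> perron_feasible n k j"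
    using assms(3,4) k by (simp add: perron_feasible_def if_distrib[of "\<lambda>t. t ^ k"] power_0_left cong: if_cong)
  then have "K \<noteq> {}" using restrict_K by blast
  moreover have "continuous_on K (laplacian_form k E)"
    unfolding laplacian_form_def by (intro continuous_intros)
  ultimately obtain x where x: "x \<in> K" "\<forall>y\<in>K. laplacian_form k E x \<le> laplacian_form k E y"
    using continuous_attains_inf[OF compact_perron_feasible_supported[OF k]] unfolding K_def by blast
  have "inv_perron n k E j = laplacian_form k E x"
    unfolding inv_perron_eq_Inf
  proof (rule cInf_eq_minimum)
    fix z assume "z \<in> laplacian_form k E ` perron_feasible n k j"
    then obtain y where "y \<in> perron_feasible n k j" "z = laplacian_form k E y" by blast
    moreover have "laplacian_form k E (restrict y) = laplacian_form k E y"
      by (rule laplacian_form_cong[OF H]) (simp add: restrict_def)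
    ultimately show "laplacian_form k E x \<le> z" using x(2) restrict_K by metis
  qed (use x(1) in \<open>simp add: K_def\<close>)
  moreover from x(1) have "x \<in> perron_feasible n k j" by (simp add: K_def)
  ultimately show ?thesis using that by blast
qed

lemma inv_perron_pos_if_hg_connected:
  assumes H: "uniform_hypergraph n k E" and k: "k \<ge> 1" and "n \<ge> 2"
    and connected: "hg_connected n E" and j: "j \<in> {1..n}"
  shows "inv_perron n k E j > 0"
proof -
  define i where "i = (if j = 1 then 2 else (1::nat))"
  have "i \<in> {1..n}" "i \<noteq> j" using \<open>n \<ge> 2\<close> by (auto simp: i_def)
  then obtain x where x: "x \<in> perron_feasible n k j" "inv_perron n k E j = laplacian_form k E x"
    using inv_perron_attained[OF H k] by blast
  have nonneg: "\<forall>i\<in>{1..n}. x i \<ge> 0" using x(1) by (simp add: perron_feasible_def)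
  have "laplacian_form k E x \<noteq> 0"
  proof
    assume "laplacian_form k E x = 0"
    then have const: "\<forall>e\<in>E. \<forall>a\<in>e. \<forall>b\<in>e. x a = x b"
      using laplacian_form_eq_0_iff[OF H nonneg] by blast
    have "x l = x j" if "l \<in> {1..n}" for l
    proof -
      have "(hg_adj E)\<^sup>*\<^sup>* j l"
        using connected j that unfolding hg_connected_iff_rtranclp_hg_adj by blast
      then show ?thesis by (rule edgewise_constant_rtranclp_hg_adj[OF const])
    qed
    then have "(\<Sum>i\<in>{1..n}. x i ^ k) = 0" using x(1) k by (simp add: perron_feasible_def)
    then show False using x(1) by (simp add: perron_feasible_def)
  qed
  with laplacian_form_nonneg[OF H nonneg] x(2) show ?thesis by simp
qed

theorem theorem3p1:
  fixes n k :: nat and E :: "nat set set"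
  assumes "uniform_hypergraph n k E" and "k \<ge> 2" and "n \<ge> 2"
  shows "(hg_connected n E \<longleftrightarrow> (\<forall>j\<in>{1..n}. inv_perron n k E j > 0))
       \<and> ((\<forall>j\<in>{1..n}. inv_perron n k E j > 0) \<longleftrightarrow> (\<exists>j\<in>{1..n}. inv_perron n k E j > 0))"
proof -
  have k: "k \<ge> 1" using assms(2) by simp
  have "inv_perron n k E j > 0" if "hg_connected n E" "j \<in> {1..n}" for j
    using inv_perron_pos_if_hg_connected[OF assms(1) k assms(3) that] .
  moreover have "hg_connected n E" if "inv_perron n k E j > 0" for j
  proof (rule ccontr)
    assume "\<not> hg_connected n E"
    from inv_perron_nonpos_if_not_hg_connected[OF assms(1) k this, of j] that show False by simp
  qed
  moreover have "1 \<in> {1..n}" using assms(3) by simp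
  ultimately show ?thesis by blast
qed

end
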